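(* Let $\kappa\ge 2$, let $\psi^+$ be a rooted binary topological tree on a taxon set $X$, and let $a,b,c,d\in X$ be distinct taxa such that the unrooted topology of $\psi^+|_{\{a,b,c,d\}}$ is the quartet $ab|cd$. For $P\in\mathrm{UE}_\kappa(\psi^+)$ let $\tilde P=P_{\{a,b,c,d\}}$. Then for all $P\in\mathrm{UE}_\kappa(\psi^+)$, $\operatorname{Flat}_{ab|cd}(\tilde P)$ has rank at most $\binom{\kappa+1}{2}$, while for generic $P\in\mathrm{UE}_\kappa(\psi^+)$ both $\operatorname{Flat}_{ac|bd}(\tilde P)$ and $\operatorname{Flat}_{ad|bc}(\tilde P)$ have rank $\kappa^2$.
   Context: A $\kappa$-state site pattern probability tensor on a finite taxon set $X$ is an $|X|$-way $\kappa\times\cdots\times\kappa$ real array with one index per taxon, non-negative entries summing to 1. $P_Y$ denotes marginalization to taxa $Y\subseteq X$; $\psi^+|_Y$ is the induced rooted subtree. A 2-clade of a rooted tree is a pair of leaves that are exactly the leaf descendants of some vertex. $\mathrm{UE}_\kappa(\psi^+)$ is the set of all such tensors $P$ such that for every $Y\subseteq X$ and every 2-clade $\{a,b\}$ of $\psi^+|_Y$, $P_Y$ is invariant under exchanging the $a$ and $b$ indices. For a 4-way $\kappa\times\kappa\times\kappa\times\kappa$ array $\tilde P$ with indices corresponding to taxa $a,b,c,d$, the flattening $\operatorname{Flat}_{ab|cd}(\tilde P)$ is the $\kappa^2\times\kappa^2$ matrix with rows indexed by pairs $(i,j)$ of states of $a,b$, columns indexed by pairs $(k,l)$ of states of $c,d$,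 and $((i,j),(k,l))$-entry $\tilde P(i,j,k,l)$; $\operatorname{Flat}_{ac|bd}$ and $\operatorname{Flat}_{ad|bc}$ are defined analogously, with rows indexed by the states of the first pair of taxa and columns by the states of the second pair. "Generic" means: outside a subset of measure zero (a proper algebraic subset) of $\mathrm{UE}_\kappa(\psi^+)$. *)

theory Defs
  imports "HOL-Library.FuncSet" "Jordan_Normal_Form.DL_Rank"
begin

datatype 'a rtree = Leaf 'a | Node "'a rtree" "'a rtree"

fun leaves_list :: "'a rtree \<Rightarrow> 'a list" where
  "leaves_list (Leaf x) = [x]"
| "leaves_list (Node l r) = leaves_list l @ leaves_list r"

definition leaves :: "'a rtree \<Rightarrow> 'a set" where
  "leaves T = set (leaves_list T)"

text \<open>A rooted binary topological tree on its taxon set: leaf labels distinct.\<close>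
definition well_labelled :: "'a rtree \<Rightarrow> bool" where
  "well_labelled T \<longleftrightarrow> distinct (leaves_list T)"

fun subtrees :: "'a rtree \<Rightarrow> 'a rtree set" where
  "subtrees (Leaf x) = {Leaf x}"
| "subtrees (Node l r) = insert (Node l r) (subtrees l \<union> subtrees r)"

definition clusters :: "'a rtree \<Rightarrow> 'a set set" where
  "clusters T = leaves ` subtrees T"

definition two_clades :: "'a rtree \<Rightarrow> 'a set set" where
  "two_clades T = {C \<in> clusters T. card C = 2}"

text \<open>Induced rooted subtree on Y (degree-2 vertices suppressed); None if Y misses all leaves.\<close>
fun induced :: "'a rtree \<Rightarrow> 'a set \<Rightarrow> 'a rtree option" where
  "induced (Leaf x) Y = (if x \<in> Y then Some (Leaf x) else None)"
| "induced (Node l r) Y =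
     (case (induced l Y, induced r Y) of
        (Some l', Some r') \<Rightarrow> Some (Node l' r')
      | (Some l', None) \<Rightarrow> Some l'
      | (None, Some r') \<Rightarrow> Some r'
      | (None, None) \<Rightarrow> None)"

definition unrooted_splits :: "'a rtree \<Rightarrow> 'a set set set" where
  "unrooted_splits T = {{C, leaves T - C} | C. C \<in> clusters T \<and> C \<noteq> leaves T}"

definition quartet_topology :: "'a rtree \<Rightarrow> 'a \<Rightarrow> 'a \<Rightarrow> 'a \<Rightarrow> 'a \<Rightarrow> bool" where
  "quartet_topology T a b c d \<longleftrightarrow>
     (\<exists>T'. induced T {a,b,c,d} = Some T' \<and> {{a,b},{c,d}} \<in> unrooted_splits T')"

text \<open>A tensor indexed by Y with kappa states: a real function on assignments Y \<rightarrow> {..<kappa}.\<close>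
definition assignments :: "'a set \<Rightarrow> nat \<Rightarrow> ('a \<Rightarrow> nat) set" where
  "assignments Y \<kappa> = (Y \<rightarrow>\<^sub>E {..<\<kappa>})"

definition is_prob_tensor :: "nat \<Rightarrow> 'a set \<Rightarrow> (('a \<Rightarrow> nat) \<Rightarrow> real) \<Rightarrow> bool" where
  "is_prob_tensor \<kappa> X P \<longleftrightarrow>
     (\<forall>s \<in> assignments X \<kappa>. P s \<ge> 0) \<and>
     (\<forall>s. s \<notin> assignments X \<kappa> \<longrightarrow> P s = 0) \<and>
     (\<Sum>s \<in> assignments X \<kappa>. P s) = 1"

definition marg :: "'a set \<Rightarrow> nat \<Rightarrow> (('a \<Rightarrow> nat) \<Rightarrow> real) \<Rightarrow> 'a set \<Rightarrow> ('a \<Rightarrow> nat) \<Rightarrow> real" where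
  "marg X \<kappa> P Y = (\<lambda>s. if s \<in> assignments Y \<kappa>
       then (\<Sum>t \<in> {t \<in> assignments X \<kappa>. restrict t Y = s}. P t) else 0)"

definition swap_idx :: "('a \<Rightarrow> nat) \<Rightarrow> 'a \<Rightarrow> 'a \<Rightarrow> ('a \<Rightarrow> nat)" where
  "swap_idx s x y = s(x := s y, y := s x)"

definition UE :: "nat \<Rightarrow> 'a rtree \<Rightarrow> (('a \<Rightarrow> nat) \<Rightarrow> real) set" where
  "UE \<kappa> T = {P. is_prob_tensor \<kappa> (leaves T) P \<and>
     (\<forall>Y T'. Y \<subseteq> leaves T \<longrightarrow> induced T Y = Some T' \<longrightarrow>
        (\<forall>x y. {x, y} \<in> two_clades T' \<longrightarrow>
           (\<forall>s \<in> assignments Y \<kappa>.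
              marg (leaves T) \<kappa> P Y (swap_idx s x y) = marg (leaves T) \<kappa> P Y s)))}"

definition asg4 :: "'a \<Rightarrow> 'a \<Rightarrow> 'a \<Rightarrow> 'a \<Rightarrow> nat \<Rightarrow> nat \<Rightarrow> nat \<Rightarrow> nat \<Rightarrow> 'a \<Rightarrow> nat" where
  "asg4 x y z w i j k l = (\<lambda>t. if t = x then i else if t = y then j
      else if t = z then k else if t = w then l else undefined)"

text \<open>Flat_{xy|zw}: rows (i,j) (encoded i*kappa+j) for states of x,y; columns (k,l) for z,w.\<close>
definition flat :: "nat \<Rightarrow> (('a \<Rightarrow> nat) \<Rightarrow> real) \<Rightarrow> 'a \<Rightarrow> 'a \<Rightarrow> 'a \<Rightarrow> 'a \<Rightarrow> real mat" where
  "flat \<kappa> P x y z w = mat (\<kappa> * \<kappa>) (\<kappa> * \<kappa>)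
     (\<lambda>(r, c). P (asg4 x y z w (r div \<kappa>) (r mod \<kappa>) (c div \<kappa>) (c mod \<kappa>)))"

definition mat_rank :: "real mat \<Rightarrow> nat" where
  "mat_rank A = vec_space.rank (dim_row A) A"

inductive_set poly_fun :: "(('b \<Rightarrow> real) \<Rightarrow> real) set" where
  const: "(\<lambda>P. c) \<in> poly_fun"
| coord: "(\<lambda>P. P s) \<in> poly_fun"
| add: "f \<in> poly_fun \<Longrightarrow> g \<in> poly_fun \<Longrightarrow> (\<lambda>P. f P + g P) \<in> poly_fun"
| mult: "f \<in> poly_fun \<Longrightarrow> g \<in> poly_fun \<Longrightarrow> (\<lambda>P. f P * g P) \<in> poly_fun"

text \<open>Q holds generically on S: outside a proper algebraic subset of S.\<close>
definition generic_on :: "(('b \<Rightarrow> real) set) \<Rightarrow> (('b \<Rightarrow> real) \<Rightarrow> bool) \<Rightarrow> bool" where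
  "generic_on S Q \<longleftrightarrow>
     (\<exists>f \<in> poly_fun. (\<exists>P \<in> S. f P \<noteq> 0) \<and> (\<forall>P \<in> S. f P \<noteq> 0 \<longrightarrow> Q P))"

end

theory Submission
  imports Defs
begin

text \<open>
  If \<open>{a, b}\<close> is a 2-clade of the induced quartet tree, every \<open>P \<in> UE\<close> is invariant under
  exchanging the states of \<open>a\<close> and \<open>b\<close>, so the rows \<open>(i, j)\<close> and \<open>(j, i)\<close> of
  \<open>Flat\<^sub>a\<^sub>b\<^sub>|\<^sub>c\<^sub>d\<close> coincide and it is a sum of one rank-one matrix per unordered pair
  \<open>{i, j}\<close>; likewise for the columns when \<open>{c, d}\<close> is the 2-clade.

  The product of the determinants of the other two flattenings is a polynomial in the entries
  of \<open>P\<close>, so genericity reduces to one \<open>P \<in> UE\<close> where it does not vanish. Take the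
  vertex \<open>S\<close> of \<open>\<psi>\<close> cutting out the 2-clade, draw a uniform root state, give all leaves
  of \<open>S\<close> one common state and every other leaf an independent state, each drawn with the
  transition matrix \<open>M = I/2 + J/(2\<kappa>)\<close>. Any 2-clade of an induced subtree either lies on
  one side of \<open>S\<close> or meets \<open>S\<close> in a single taxon, which makes this tensor lie in UE.
  Its quartet marginal is \<open>\<delta>(s\<^sub>a, s\<^sub>b) \<phi>(s\<^sub>a, s\<^sub>c, s\<^sub>d)\<close>, and both remaining
  flattenings of it are block diagonal with the invertible blocks \<open>M\<^sup>T diag(M e\<^sub>i) M / \<kappa>\<close>.
\<close>

lemma leaves_Leaf [simp]: "leaves (Leaf x) = {x}"
  by (simp add: leaves_def)

lemma leaves_Node [simp]: "leaves (Node l r) = leaves l \<union> leaves r"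
  by (simp add: leaves_def)

lemma finite_leaves [simp]: "finite (leaves T)"
  by (simp add: leaves_def)

lemma well_labelled_NodeD:
  "well_labelled (Node l r) \<Longrightarrow> well_labelled l \<and> well_labelled r \<and> leaves l \<inter> leaves r = {}"
  by (simp add: well_labelled_def leaves_def)

lemma subtrees_leaves_subset: "S \<in> subtrees T \<Longrightarrow> leaves S \<subseteq> leaves T"
  by (induction T) auto

lemma subtrees_leaves_laminar:
  assumes "well_labelled T" "S \<in> subtrees T" "S' \<in> subtrees T"
  shows "leaves S \<subseteq> leaves S' \<or> leaves S' \<subseteq> leaves S \<or> leaves S \<inter> leaves S' = {}"
  using assms
proof (induction T)
  case (Node l r)
  have lr: "well_labelled l" "well_labelled r" "leaves l \<inter> leaves r = {}"
    using well_labelled_NodeD[OF Node.prems(1)] by auto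
  consider "S = Node l r" | "S' = Node l r" | "S \<in> subtrees l" "S' \<in> subtrees l"
    | "S \<in> subtrees r" "S' \<in> subtrees r" | "S \<in> subtrees l" "S' \<in> subtrees r"
    | "S \<in> subtrees r" "S' \<in> subtrees l"
    using Node.prems(2,3) by (simp only: subtrees.simps insert_iff Un_iff) blast
  then show ?case
  proof cases
    case 1
    then show ?thesis using subtrees_leaves_subset[OF Node.prems(3)] by blast
  next
    case 2
    then show ?thesis using subtrees_leaves_subset[OF Node.prems(2)] by blast
  next
    case 3
    then show ?thesis using Node.IH(1) lr(1) by blast
  next
    case 4
    then show ?thesis using Node.IH(2) lr(2) by blast
  next
    case 5
    then show ?thesis using subtrees_leaves_subset[of S l] subtrees_leaves_subset[of S' r] lr(3) by blast
  next
    case 6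
    then show ?thesis using subtrees_leaves_subset[of S r] subtrees_leaves_subset[of S' l] lr(3) by blast
  qed
qed simp

lemma leaves_induced_case:
  "(case induced T Y of None \<Rightarrow> {} | Some T' \<Rightarrow> leaves T') = leaves T \<inter> Y"
  by (induction T) (simp_all add: Int_Un_distrib2 split: option.split option.split_asm)

lemma leaves_induced: "induced T Y = Some T' \<Longrightarrow> leaves T' = leaves T \<inter> Y"
  using leaves_induced_case[of T Y] by simp

lemma clusters_induced:
  assumes "induced T Y = Some T'" "C \<in> clusters T'"
  shows "\<exists>S\<in>subtrees T. C = leaves S \<inter> Y"
  using assms
proof (induction T arbitrary: T')
  case (Node l r)
  have IHl: "\<exists>S\<in>subtrees (Node l r). C = leaves S \<inter> Y"
    if "induced l Y = Some l'" "C \<in> clusters l'" for l'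
    using Node.IH(1)[OF that] by auto
  have IHr: "\<exists>S\<in>subtrees (Node l r). C = leaves S \<inter> Y"
    if "induced r Y = Some r'" "C \<in> clusters r'" for r'
    using Node.IH(2)[OF that] by auto
  show ?case
  proof (cases "induced l Y"; cases "induced r Y")
    fix l' r' assume l': "induced l Y = Some l'" and r': "induced r Y = Some r'"
    then have "C = leaves (Node l' r') \<or> C \<in> clusters l' \<or> C \<in> clusters r'"
      using Node.prems by (auto simp: clusters_def)
    moreover have "leaves (Node l' r') = leaves (Node l r) \<inter> Y"
      using leaves_induced[OF l'] leaves_induced[OF r'] by auto
    ultimately show ?thesis using IHl[OF l'] IHr[OF r'] by (metis subtrees.simps(2) insertI1)
  next
    fix l' assume "induced l Y = Some l'" "induced r Y = None"
    then show ?thesis using Node.prems IHl by simp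
  next
    fix r' assume "induced l Y = None" "induced r Y = Some r'"
    then show ?thesis using Node.prems IHr by simp
  next
    assume "induced l Y = None" "induced r Y = None"
    then show ?thesis using Node.prems by simp
  qed
next
  case (Leaf x)
  then have "C = {x}" "x \<in> Y" by (auto simp: clusters_def split: if_splits)
  then show ?case by auto
qed

lemma quartet_topology_two_clade:
  assumes "distinct [a, b, c, d]" "quartet_topology T a b c d"
  obtains T' C where "induced T {a, b, c, d} = Some T'" "C \<in> two_clades T'" "C = {a, b} \<or> C = {c, d}"
proof -
  obtain T' C where T': "induced T {a, b, c, d} = Some T'" and C: "C \<in> clusters T'"
    and split: "{{a, b}, {c, d}} = {C, leaves T' - C}"
    using assms(2) unfolding quartet_topology_def unrooted_splits_def by blast
  have "C \<in> {{a, b}, {c, d}}" unfolding split by simp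
  then have "C = {a, b} \<or> C = {c, d}" by simp
  moreover from this have "card C = 2" using assms(1) by auto
  ultimately show ?thesis using that T' C by (simp add: two_clades_def)
qed

lemma finite_assignments [simp]: "finite X \<Longrightarrow> finite (assignments X \<kappa>)"
  by (simp add: assignments_def finite_PiE)

lemma assignments_upd:
  "s \<in> assignments Y \<kappa> \<Longrightarrow> k < \<kappa> \<Longrightarrow> s(d := k) \<in> assignments (insert d Y) \<kappa>"
  by (simp add: assignments_def PiE_fun_upd)

lemma assignments_lt: "s \<in> assignments Y \<kappa> \<Longrightarrow> x \<in> Y \<Longrightarrow> s x < \<kappa>"
  by (auto simp: assignments_def)

lemma swap_idx_assignments:
  assumes "x \<in> Y" "y \<in> Y" "s \<in> assignments Y \<kappa>"
  shows "swap_idx s x y \<in> assignments Y \<kappa>"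
  using assms unfolding assignments_def swap_idx_def by (auto simp: PiE_iff extensional_def)

lemma swap_idx_eq_comp_transpose: "swap_idx s x y = s \<circ> transpose x y"
  by (auto simp: swap_idx_def transpose_def fun_eq_iff)

lemma prod_swap_idx:
  assumes "x \<in> A \<longleftrightarrow> y \<in> A"
  shows "(\<Prod>u\<in>A. f (swap_idx s x y u)) = (\<Prod>u\<in>A. f (s u))"
proof (cases "x \<in> A")
  case True
  then have "transpose x y permutes A" using assms by (simp add: permutes_swap_id)
  then show ?thesis
    by (subst prod.permute[of "transpose x y"]) (simp_all add: comp_def swap_idx_eq_comp_transpose)
next
  case False
  then show ?thesis using assms by (intro prod.cong) (auto simp: swap_idx_def)
qed

lemma marg_self: "s \<in> assignments X \<kappa> \<Longrightarrow> marg X \<kappa> P X s = P s"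
proof -
  assume s: "s \<in> assignments X \<kappa>"
  then have "{t \<in> assignments X \<kappa>. restrict t X = s} = {s}"
    by (auto simp: assignments_def PiE_restrict)
  then show ?thesis using s by (simp add: marg_def)
qed

lemma marg_insert:
  assumes "finite X" "d \<in> X" "d \<notin> Y" "s \<in> assignments Y \<kappa>"
  shows "marg X \<kappa> P Y s = (\<Sum>k<\<kappa>. marg X \<kappa> P (insert d Y) (s(d := k)))"
proof -
  let ?A = "\<lambda>k. {t \<in> assignments X \<kappa>. restrict t (insert d Y) = s(d := k)}"
  have s_ext: "s x = undefined" if "x \<notin> Y" for x
    using assms(4) that by (auto simp: assignments_def)
  have "restrict t Y = s \<longleftrightarrow> restrict t (insert d Y) = s(d := t d)" for t
    using assms(3) s_ext by (auto simp: fun_eq_iff restrict_def)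
  moreover have at_d: "t d = k" if "restrict t (insert d Y) = s(d := k)" for t k
    using fun_cong[OF that, of d] by simp
  ultimately have "{t \<in> assignments X \<kappa>. restrict t Y = s} = (\<Union>k<\<kappa>. ?A k)"
    using assms(2) by (auto simp: assignments_def)
  moreover have "?A j \<inter> ?A k = {}" if "j \<noteq> k" for j k
    using that at_d by blast
  ultimately have "marg X \<kappa> P Y s = (\<Sum>k<\<kappa>. \<Sum>t\<in>?A k. P t)"
    using assms(1,4) by (simp add: marg_def sum.UNION_disjoint)
  also have "\<dots> = (\<Sum>k<\<kappa>. marg X \<kappa> P (insert d Y) (s(d := k)))"
    using assms(4) by (simp add: marg_def assignments_upd)
  finally show ?thesis .
qed

lemma UE_swap_invariant:
  assumes "P \<in> UE \<kappa> T" "Y \<subseteq> leaves T" "induced T Y = Some T'" "{x, y} \<in> two_clades T'"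
    "s \<in> assignments Y \<kappa>"
  shows "marg (leaves T) \<kappa> P Y (swap_idx s x y) = marg (leaves T) \<kappa> P Y s"
  using assms unfolding UE_def by blast

section \<open>A tensor in UE with a prescribed clade\<close>

lemma sum_mult_of_bool_eq:
  fixes f :: "nat \<Rightarrow> 'a::comm_semiring_1"
  shows "w < n \<Longrightarrow> (\<Sum>k<n. f k * of_bool (w = k)) = f w"
  by (simp add: of_bool_def if_distrib[of "(*) _"] cong: if_cong)

definition mix :: "nat \<Rightarrow> nat \<Rightarrow> nat \<Rightarrow> real" where
  "mix \<kappa> z w = (if z = w then 1/2 else 0) + 1 / (2 * real \<kappa>)"

lemma mix_nonneg: "0 \<le> mix \<kappa> z w"
  by (simp add: mix_def)

lemma mix_pos: "0 < \<kappa> \<Longrightarrow> 0 < mix \<kappa> z w"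
  by (simp add: mix_def add_nonneg_pos)

lemma mix_sym: "mix \<kappa> z w = mix \<kappa> w z"
  by (simp add: mix_def)

lemma sum_mix: "z < \<kappa> \<Longrightarrow> (\<Sum>w<\<kappa>. mix \<kappa> z w) = 1"
  by (simp add: mix_def sum.distrib)

text \<open>Root state \<open>z\<close> uniform; the taxa of \<open>V\<close> share one state \<open>w\<close> and every other taxon
  of \<open>Y\<close> gets its own state, each drawn from row \<open>z\<close> of \<open>mix \<kappa>\<close>.\<close>

definition clade_tensor :: "nat \<Rightarrow> 'a set \<Rightarrow> 'a set \<Rightarrow> ('a \<Rightarrow> nat) \<Rightarrow> real" where
  "clade_tensor \<kappa> V Y s = (if s \<in> assignments Y \<kappa> then
     (\<Sum>z<\<kappa>. (\<Sum>w<\<kappa>. mix \<kappa> z w * (\<Prod>x\<in>V \<inter> Y. of_bool (s x = w)))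
        * (\<Prod>x\<in>Y - V. mix \<kappa> z (s x))) / real \<kappa>
   else 0)"

lemma sum_weighted_double_sum:
  fixes c :: "nat \<Rightarrow> nat \<Rightarrow> nat \<Rightarrow> 'a::field"
  assumes "\<And>z w. z < \<kappa> \<Longrightarrow> w < \<kappa> \<Longrightarrow> (\<Sum>k<\<kappa>. c k z w) = 1"
  shows "(\<Sum>k<\<kappa>. (\<Sum>z<\<kappa>. \<Sum>w<\<kappa>. c k z w * g z w) / r) = (\<Sum>z<\<kappa>. \<Sum>w<\<kappa>. g z w) / r"
proof -
  have "(\<Sum>k<\<kappa>. (\<Sum>z<\<kappa>. \<Sum>w<\<kappa>. c k z w * g z w) / r) = (\<Sum>z<\<kappa>. \<Sum>w<\<kappa>. \<Sum>k<\<kappa>. c k z w * g z w) / r"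
    unfolding sum_divide_distrib[symmetric] by (subst sum.swap, subst (2) sum.swap) (rule refl)
  also have "\<dots> = (\<Sum>z<\<kappa>. \<Sum>w<\<kappa>. g z w) / r"
    using assms by (simp add: sum_distrib_right[symmetric])
  finally show ?thesis .
qed

lemma sum_clade_tensor_insert:
  assumes "finite Y" "d \<notin> Y" "s \<in> assignments Y \<kappa>"
  shows "(\<Sum>k<\<kappa>. clade_tensor \<kappa> V (insert d Y) (s(d := k))) = clade_tensor \<kappa> V Y s"
proof -
  define A where "A w = (\<Prod>x\<in>V \<inter> Y. of_bool (s x = w) :: real)" for w
  define B where "B z = (\<Prod>x\<in>Y - V. mix \<kappa> z (s x))" for z
  \<comment> \<open>the probability that \<open>d\<close> gets state \<open>k\<close> given root state \<open>z\<close> and clade state \<open>w\<close>\<close>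
  define c where "c k z w = (if d \<in> V then of_bool (k = w) else mix \<kappa> z k)" for k z w
  have A_upd: "(\<Prod>x\<in>V \<inter> Y. of_bool ((s(d := k)) x = w)) = A w" for k w
    unfolding A_def using assms(2) by (intro prod.cong) auto
  have B_upd: "(\<Prod>x\<in>Y - V. mix \<kappa> z ((s(d := k)) x)) = B z" for k z
    unfolding B_def using assms(2) by (intro prod.cong) auto
  have "clade_tensor \<kappa> V (insert d Y) (s(d := k))
      = (\<Sum>z<\<kappa>. \<Sum>w<\<kappa>. c k z w * (mix \<kappa> z w * A w * B z)) / real \<kappa>" if "k < \<kappa>" for k
  proof (cases "d \<in> V")
    case True
    then have "V \<inter> insert d Y = insert d (V \<inter> Y)" "insert d Y - V = Y - V" by auto
    then show ?thesis
      using True that assms by (simp add: c_def clade_tensor_def assignments_upd A_upd B_upd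
          sum_distrib_right sum_distrib_left fun_upd_same mult_ac del: fun_upd_apply)
  next
    case False
    then have "V \<inter> insert d Y = V \<inter> Y" "insert d Y - V = insert d (Y - V)" by auto
    then show ?thesis
      using False that assms by (simp add: c_def clade_tensor_def assignments_upd A_upd B_upd
          sum_distrib_right sum_distrib_left fun_upd_same mult_ac del: fun_upd_apply)
  qed
  moreover have "(\<Sum>k<\<kappa>. c k z w) = 1" if "z < \<kappa>" "w < \<kappa>" for z w
    using that by (cases "d \<in> V") (simp_all add: c_def sum_mix of_bool_def sum.delta')
  ultimately have "(\<Sum>k<\<kappa>. clade_tensor \<kappa> V (insert d Y) (s(d := k)))
      = (\<Sum>z<\<kappa>. \<Sum>w<\<kappa>. mix \<kappa> z w * A w * B z) / real \<kappa>"
    by (simp add: sum_weighted_double_sum)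
  also have "\<dots> = clade_tensor \<kappa> V Y s"
    using assms(3) by (simp add: clade_tensor_def A_def B_def sum_distrib_right)
  finally show ?thesis .
qed

lemma marg_clade_tensor:
  assumes "finite X" "Y \<subseteq> X"
  shows "marg X \<kappa> (clade_tensor \<kappa> V X) Y = clade_tensor \<kappa> V Y"
proof -
  have "\<forall>Y. Y \<subseteq> X \<longrightarrow> X - Y = D \<longrightarrow> marg X \<kappa> (clade_tensor \<kappa> V X) Y = clade_tensor \<kappa> V Y"
    if "finite D" for D
    using that
  proof (induction D rule: finite_induct)
    case empty
    show ?case
    proof (intro allI impI ext)
      fix Y s assume "Y \<subseteq> X" "X - Y = {}"
      then have "Y = X" by blast
      then show "marg X \<kappa> (clade_tensor \<kappa> V X) Y s = clade_tensor \<kappa> V Y s"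
        by (cases "s \<in> assignments X \<kappa>") (simp add: marg_self, simp add: marg_def clade_tensor_def)
    qed
  next
    case (insert d D)
    show ?case
    proof (intro allI impI ext)
      fix Y s assume Y: "Y \<subseteq> X" "X - Y = insert d D"
      then have d: "d \<in> X" "d \<notin> Y" by auto
      have "insert d Y \<subseteq> X" "X - insert d Y = D" using Y d insert.hyps(2) by auto
      then have IH: "marg X \<kappa> (clade_tensor \<kappa> V X) (insert d Y) = clade_tensor \<kappa> V (insert d Y)"
        using insert.IH by blast
      show "marg X \<kappa> (clade_tensor \<kappa> V X) Y s = clade_tensor \<kappa> V Y s"
      proof (cases "s \<in> assignments Y \<kappa>")
        case True
        have "finite Y" using Y(1) assms(1) finite_subset by blast
        then show ?thesis
          using True d IH assms(1) by (simp add: marg_insert sum_clade_tensor_insert)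
      qed (simp add: marg_def clade_tensor_def)
    qed
  qed
  then show ?thesis using assms by blast
qed

lemma clade_tensor_prob:
  assumes "finite X" "0 < \<kappa>"
  shows "is_prob_tensor \<kappa> X (clade_tensor \<kappa> V X)"
proof -
  let ?e = "\<lambda>_. undefined :: nat"
  have e: "?e \<in> assignments {} \<kappa>" by (simp add: assignments_def)
  have "(\<Sum>s\<in>assignments X \<kappa>. clade_tensor \<kappa> V X s) = marg X \<kappa> (clade_tensor \<kappa> V X) {} ?e"
    using e unfolding marg_def by (auto simp: restrict_def intro: sum.cong)
  also have "\<dots> = 1"
    using e assms by (simp add: marg_clade_tensor clade_tensor_def sum_mix)
  finally show ?thesis
    by (simp add: is_prob_tensor_def clade_tensor_def mix_nonneg sum_nonneg prod_nonneg)
qed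

lemma clade_tensor_swap:
  assumes "x \<in> Y" "y \<in> Y" "x \<in> V \<longleftrightarrow> y \<in> V" "s \<in> assignments Y \<kappa>"
  shows "clade_tensor \<kappa> V Y (swap_idx s x y) = clade_tensor \<kappa> V Y s"
proof -
  have "(\<Prod>u\<in>V \<inter> Y. of_bool (swap_idx s x y u = w)) = (\<Prod>u\<in>V \<inter> Y. of_bool (s u = w) :: real)"
    for w
    using assms(1-3) by (intro prod_swap_idx) blast
  moreover have "(\<Prod>u\<in>Y - V. mix \<kappa> z (swap_idx s x y u)) = (\<Prod>u\<in>Y - V. mix \<kappa> z (s u))" for z
    using assms(1-3) by (intro prod_swap_idx) blast
  ultimately show ?thesis
    using assms(4) swap_idx_assignments[OF assms(1,2,4)] by (simp add: clade_tensor_def)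
qed

lemma clade_tensor_eq_exchangeable:
  assumes "finite Y" "V \<inter> Y \<subseteq> {x}"
  shows "clade_tensor \<kappa> V Y = clade_tensor \<kappa> {} Y"
proof
  fix s
  show "clade_tensor \<kappa> V Y s = clade_tensor \<kappa> {} Y s"
  proof (cases "s \<in> assignments Y \<kappa> \<and> V \<inter> Y = {x}")
    case True
    then have x: "x \<in> Y" "Y = insert x (Y - V)" "x \<notin> Y - V" by auto
    have "s x < \<kappa>" using assignments_lt[OF conjunct1[OF True] x(1)] .
    have "(\<Sum>w<\<kappa>. mix \<kappa> z w * (\<Prod>u\<in>V \<inter> Y. of_bool (s u = w))) * (\<Prod>u\<in>Y - V. mix \<kappa> z (s u))
        = (\<Sum>w<\<kappa>. mix \<kappa> z w * (\<Prod>u\<in>{} \<inter> Y. of_bool (s u = w))) * (\<Prod>u\<in>Y - {}. mix \<kappa> z (s u))"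
      if "z < \<kappa>" for z
    proof -
      have "(\<Sum>w<\<kappa>. mix \<kappa> z w * (\<Prod>u\<in>V \<inter> Y. of_bool (s u = w))) = mix \<kappa> z (s x)"
        using True \<open>s x < \<kappa>\<close> by (simp add: sum_mult_of_bool_eq)
      moreover have "(\<Prod>u\<in>Y. mix \<kappa> z (s u)) = mix \<kappa> z (s x) * (\<Prod>u\<in>Y - V. mix \<kappa> z (s u))"
        using x assms(1) prod.insert[of "Y - V" x] by simp
      ultimately show ?thesis using that by (simp add: sum_mix)
    qed
    then show ?thesis
      using True by (simp add: clade_tensor_def)
  next
    case False
    then have "s \<notin> assignments Y \<kappa> \<or> V \<inter> Y = {}" using assms(2) by blast
    then show ?thesis
    proof
      assume "V \<inter> Y = {}"
      then have "V \<inter> Y = {} \<inter> Y" "Y - V = Y - {}" by auto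
      then show ?thesis unfolding clade_tensor_def by presburger
    qed (simp add: clade_tensor_def)
  qed
qed

lemma clade_tensor_UE:
  assumes "well_labelled T" "S \<in> subtrees T" "0 < \<kappa>"
  shows "clade_tensor \<kappa> (leaves S) (leaves T) \<in> UE \<kappa> T"
  unfolding UE_def
proof (intro CollectI conjI allI impI ballI)
  let ?V = "leaves S"
  show "is_prob_tensor \<kappa> (leaves T) (clade_tensor \<kappa> ?V (leaves T))"
    using assms(3) by (simp add: clade_tensor_prob)
  fix Y T' x y s
  assume Y: "Y \<subseteq> leaves T" and T': "induced T Y = Some T'" and xy: "{x, y} \<in> two_clades T'"
    and s: "s \<in> assignments Y \<kappa>"
  have fin: "finite Y" using Y finite_leaves by (rule finite_subset)
  obtain S' where S': "S' \<in> subtrees T" "{x, y} = leaves S' \<inter> Y"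
    using xy clusters_induced[OF T'] by (auto simp: two_clades_def)
  then have "x \<in> Y" "y \<in> Y" by auto
  have "clade_tensor \<kappa> ?V Y (swap_idx s x y) = clade_tensor \<kappa> ?V Y s"
  proof (cases "x \<in> ?V \<longleftrightarrow> y \<in> ?V")
    case True
    then show ?thesis by (rule clade_tensor_swap[OF \<open>x \<in> Y\<close> \<open>y \<in> Y\<close> _ s])
  next
    case False
    \<comment> \<open>the cluster of \<open>S'\<close> meets \<open>leaves S\<close> without being inside it, so it contains it\<close>
    have "x \<in> leaves S'" "y \<in> leaves S'" using S'(2) by auto
    with False have "?V \<subseteq> leaves S'"
      using subtrees_leaves_laminar[OF assms(1,2) S'(1)] by blast
    then have "?V \<inter> Y \<subseteq> {x, y}" using S'(2) by blast
    then obtain u where "?V \<inter> Y \<subseteq> {u}"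
      using False by blast
    then have "clade_tensor \<kappa> ?V Y = clade_tensor \<kappa> {} Y"
      by (rule clade_tensor_eq_exchangeable[OF fin])
    moreover have "clade_tensor \<kappa> {} Y (swap_idx s x y) = clade_tensor \<kappa> {} Y s"
      by (rule clade_tensor_swap[OF \<open>x \<in> Y\<close> \<open>y \<in> Y\<close> _ s]) simp
    ultimately show ?thesis by simp
  qed
  then show "marg (leaves T) \<kappa> (clade_tensor \<kappa> ?V (leaves T)) Y (swap_idx s x y)
      = marg (leaves T) \<kappa> (clade_tensor \<kappa> ?V (leaves T)) Y s"
    using Y by (simp add: marg_clade_tensor)
qed

definition phi :: "nat \<Rightarrow> nat \<Rightarrow> nat \<Rightarrow> nat \<Rightarrow> real" where
  "phi \<kappa> i k l = (\<Sum>z<\<kappa>. mix \<kappa> z i * mix \<kappa> z k * mix \<kappa> z l) / real \<kappa>"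

lemma phi_sym: "phi \<kappa> i k l = phi \<kappa> i l k"
  by (simp add: phi_def mult_ac)

lemma clade_tensor_quartet:
  assumes "distinct [a, b, c, d]" "V \<inter> {a, b, c, d} = {a, b}" "s \<in> assignments {a, b, c, d} \<kappa>"
  shows "clade_tensor \<kappa> V {a, b, c, d} s = of_bool (s a = s b) * phi \<kappa> (s a) (s c) (s d)"
proof -
  have "s a < \<kappa>" using assms(3) by (simp add: assignments_lt)
  have "c \<in> V \<Longrightarrow> c \<in> {a, b}" "d \<in> V \<Longrightarrow> d \<in> {a, b}" using assms(2) by blast+
  then have "c \<notin> V" "d \<notin> V" using assms(1) by auto
  moreover have "a \<in> V" "b \<in> V" using assms(2) by blast+
  ultimately have "{a, b, c, d} - V = {c, d}" by blast
  moreover have "(\<Sum>w<\<kappa>. mix \<kappa> z w * (\<Prod>x\<in>{a, b}. of_bool (s x = w)))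
      = of_bool (s a = s b) * mix \<kappa> z (s a)" for z
  proof -
    have "(\<Sum>w<\<kappa>. mix \<kappa> z w * (\<Prod>x\<in>{a, b}. of_bool (s x = w)))
        = (\<Sum>w<\<kappa>. (mix \<kappa> z w * of_bool (s b = w)) * of_bool (s a = w))"
      using assms(1) by (simp add: mult.assoc mult.commute[of "of_bool (s a = _)"])
    also have "\<dots> = mix \<kappa> z (s a) * of_bool (s b = s a)"
      using \<open>s a < \<kappa>\<close> by (rule sum_mult_of_bool_eq)
    also have "\<dots> = of_bool (s a = s b) * mix \<kappa> z (s a)"
      by (simp add: eq_commute[of "s b"])
    finally show ?thesis .
  qed
  ultimately have "clade_tensor \<kappa> V {a, b, c, d} s
      = (\<Sum>z<\<kappa>. of_bool (s a = s b) * mix \<kappa> z (s a) * (mix \<kappa> z (s c) * mix \<kappa> z (s d))) / real \<kappa>"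
    using assms by (simp add: clade_tensor_def)
  then show ?thesis by (simp add: phi_def sum_distrib_left mult.assoc)
qed

lemma sum_lessThan_square:
  "(\<Sum>r<\<kappa> * \<kappa>. f r) = (\<Sum>i<\<kappa>. \<Sum>j<\<kappa>. f (i * \<kappa> + (j::nat)))"
proof -
  have "(\<Sum>j<\<kappa>. f (i * \<kappa> + j)) = sum f {i * \<kappa>..<i * \<kappa> + \<kappa>}" for i
    by (simp add: sum.shift_bounds_nat_ivl[of f 0 "i * \<kappa>" \<kappa>, simplified] lessThan_atLeast0 add.commute)
  then show ?thesis by (simp add: sum.nat_group)
qed

lemma div_mod_lt_square: "(r::nat) < \<kappa> * \<kappa> \<Longrightarrow> r div \<kappa> < \<kappa> \<and> r mod \<kappa> < \<kappa>"
  by (cases "\<kappa> = 0") (auto simp: less_mult_imp_div_less)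

lemma pair_index_lt:
  assumes "i < \<kappa>" "j < \<kappa>"
  shows "i * \<kappa> + j < (\<kappa>::nat) * \<kappa>"
proof -
  have "i * \<kappa> + j < Suc i * \<kappa>" using assms(2) by simp
  also have "\<dots> \<le> \<kappa> * \<kappa>" using assms(1) by (intro mult_le_mono1) simp
  finally show ?thesis .
qed

definition pair_mat :: "nat \<Rightarrow> (nat \<Rightarrow> nat \<Rightarrow> nat \<Rightarrow> nat \<Rightarrow> 'a) \<Rightarrow> 'a mat" where
  "pair_mat \<kappa> F = mat (\<kappa> * \<kappa>) (\<kappa> * \<kappa>) (\<lambda>(r, c). F (r div \<kappa>) (r mod \<kappa>) (c div \<kappa>) (c mod \<kappa>))"

lemma pair_mat_carrier: "pair_mat \<kappa> F \<in> carrier_mat (\<kappa> * \<kappa>) (\<kappa> * \<kappa>)"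
  by (simp add: pair_mat_def)

lemma pair_mat_cong:
  assumes "\<And>i j k l. i < \<kappa> \<Longrightarrow> j < \<kappa> \<Longrightarrow> k < \<kappa> \<Longrightarrow> l < \<kappa> \<Longrightarrow> F i j k l = G i j k l"
  shows "pair_mat \<kappa> F = pair_mat \<kappa> G"
  unfolding pair_mat_def using assms div_mod_lt_square by (intro cong_mat) auto

lemma pair_mat_mult:
  fixes F G :: "nat \<Rightarrow> nat \<Rightarrow> nat \<Rightarrow> nat \<Rightarrow> 'a::comm_semiring_0"
  shows "pair_mat \<kappa> F * pair_mat \<kappa> G = pair_mat \<kappa> (\<lambda>i k i' k'. \<Sum>j<\<kappa>. \<Sum>l<\<kappa>. F i k j l * G j l i' k')"
proof (rule eq_matI)
  fix r c assume "r < dim_row (pair_mat \<kappa> (\<lambda>i k i' k'. \<Sum>j<\<kappa>. \<Sum>l<\<kappa>. F i k j l * G j l i' k'))"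
    "c < dim_col (pair_mat \<kappa> (\<lambda>i k i' k'. \<Sum>j<\<kappa>. \<Sum>l<\<kappa>. F i k j l * G j l i' k'))"
  then have rc: "r < \<kappa> * \<kappa>" "c < \<kappa> * \<kappa>" by (simp_all add: pair_mat_def)
  have "(pair_mat \<kappa> F * pair_mat \<kappa> G) $$ (r, c)
      = (\<Sum>t<\<kappa> * \<kappa>. pair_mat \<kappa> F $$ (r, t) * pair_mat \<kappa> G $$ (t, c))"
    using rc by (simp add: pair_mat_def scalar_prod_def lessThan_atLeast0)
  also have "\<dots> = (\<Sum>j<\<kappa>. \<Sum>l<\<kappa>. F (r div \<kappa>) (r mod \<kappa>) j l * G j l (c div \<kappa>) (c mod \<kappa>))"
    unfolding sum_lessThan_square using rc by (intro sum.cong refl) (simp add: pair_mat_def pair_index_lt)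
  finally show "(pair_mat \<kappa> F * pair_mat \<kappa> G) $$ (r, c)
      = pair_mat \<kappa> (\<lambda>i k i' k'. \<Sum>j<\<kappa>. \<Sum>l<\<kappa>. F i k j l * G j l i' k') $$ (r, c)"
    using rc by (simp add: pair_mat_def)
qed (simp_all add: pair_mat_def)

lemma one_mat_eq_pair_mat: "1\<^sub>m (\<kappa> * \<kappa>) = pair_mat \<kappa> (\<lambda>i k i' k'. of_bool (i = i' \<and> k = k'))"
proof (rule eq_matI)
  fix r c assume "r < dim_row (pair_mat \<kappa> (\<lambda>i k i' k'. of_bool (i = i' \<and> k = k') :: 'a))"
    "c < dim_col (pair_mat \<kappa> (\<lambda>i k i' k'. of_bool (i = i' \<and> k = k') :: 'a))"
  moreover have "r = c \<longleftrightarrow> r div \<kappa> = c div \<kappa> \<and> r mod \<kappa> = c mod \<kappa>"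
    by (metis div_mult_mod_eq)
  ultimately show "1\<^sub>m (\<kappa> * \<kappa>) $$ (r, c) = pair_mat \<kappa> (\<lambda>i k i' k'. of_bool (i = i' \<and> k = k')) $$ (r, c)"
    by (simp add: pair_mat_def)
qed (simp_all add: pair_mat_def)

lemma det_pair_mat_nonzero:
  fixes F G :: "nat \<Rightarrow> nat \<Rightarrow> nat \<Rightarrow> nat \<Rightarrow> 'a::field"
  assumes "\<And>i k i' k'. i < \<kappa> \<Longrightarrow> k < \<kappa> \<Longrightarrow> i' < \<kappa> \<Longrightarrow> k' < \<kappa> \<Longrightarrow>
    (\<Sum>j<\<kappa>. \<Sum>l<\<kappa>. F i k j l * G j l i' k') = of_bool (i = i' \<and> k = k')"
  shows "det (pair_mat \<kappa> F) \<noteq> 0"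
proof -
  have "pair_mat \<kappa> F * pair_mat \<kappa> G = 1\<^sub>m (\<kappa> * \<kappa>)"
    unfolding pair_mat_mult one_mat_eq_pair_mat using assms by (rule pair_mat_cong)
  then have "det (pair_mat \<kappa> F) * det (pair_mat \<kappa> G) = 1"
    by (metis det_mult det_one pair_mat_carrier)
  then show ?thesis by auto
qed

lemma flat_eq_pair_mat: "flat \<kappa> P x y z w = pair_mat \<kappa> (\<lambda>i j k l. P (asg4 x y z w i j k l))"
  by (simp add: flat_def pair_mat_def)

lemma asg4_assignments:
  "i < \<kappa> \<Longrightarrow> j < \<kappa> \<Longrightarrow> k < \<kappa> \<Longrightarrow> l < \<kappa> \<Longrightarrow> asg4 x y z w i j k l \<in> assignments {x, y, z, w} \<kappa>"
  by (auto simp: assignments_def asg4_def PiE_def extensional_def)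

lemma asg4_apply:
  assumes "distinct [x, y, z, w]"
  shows "asg4 x y z w i j k l x = i" "asg4 x y z w i j k l y = j"
    "asg4 x y z w i j k l z = k" "asg4 x y z w i j k l w = l"
  using assms by (auto simp: asg4_def)

lemma swap_idx_asg4:
  assumes "distinct [x, y, z, w]"
  shows "swap_idx (asg4 x y z w i j k l) x y = asg4 x y z w j i k l"
    and "swap_idx (asg4 x y z w i j k l) z w = asg4 x y z w i j l k"
  using assms by (auto simp: swap_idx_def asg4_def fun_eq_iff)

section \<open>Full rank of the flattenings of the witness\<close>

definition mix_inv :: "nat \<Rightarrow> nat \<Rightarrow> nat \<Rightarrow> real" where
  "mix_inv \<kappa> x y = (if x = y then 2 else 0) - 1 / real \<kappa>"

lemma sum_mix_mix_inv:
  assumes "z < \<kappa>" "z' < \<kappa>"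
  shows "(\<Sum>l<\<kappa>. mix \<kappa> z l * mix_inv \<kappa> l z') = of_bool (z = z')"
proof -
  have k: "real \<kappa> > 0" using assms by simp
  have "mix \<kappa> z l * mix_inv \<kappa> l z' =
      (if z = l then (if l = z' then 1 else 0) else 0) - (if z = l then 1 / (2 * real \<kappa>) else 0)
      + (if l = z' then 1 / real \<kappa> else 0) - 1 / (2 * real \<kappa> * real \<kappa>)" for l
    using k by (auto simp: mix_def mix_inv_def field_simps)
  then have "(\<Sum>l<\<kappa>. mix \<kappa> z l * mix_inv \<kappa> l z')
      = (if z = z' then 1 else 0) - 1 / (2 * real \<kappa>) + 1 / real \<kappa> - real \<kappa> / (2 * real \<kappa> * real \<kappa>)"
    using assms by (simp add: sum.distrib sum_subtractf sum.delta sum.delta')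
  also have "\<dots> = of_bool (z = z')" using k by (simp add: field_simps)
  finally show ?thesis .
qed

lemma sum_matrix_assoc:
  fixes f g :: "'a \<Rightarrow> 'b::comm_semiring_0"
  shows "(\<Sum>l\<in>A. (\<Sum>z\<in>A. f z * M z l) * (\<Sum>z'\<in>A. N l z' * g z'))
    = (\<Sum>z\<in>A. \<Sum>z'\<in>A. f z * g z' * (\<Sum>l\<in>A. M z l * N l z'))"
proof -
  have "(\<Sum>l\<in>A. (\<Sum>z\<in>A. f z * M z l) * (\<Sum>z'\<in>A. N l z' * g z'))
      = (\<Sum>l\<in>A. \<Sum>z\<in>A. \<Sum>z'\<in>A. f z * g z' * (M z l * N l z'))"
    by (simp add: sum_product mult_ac)
  also have "\<dots> = (\<Sum>z\<in>A. \<Sum>z'\<in>A. \<Sum>l\<in>A. f z * g z' * (M z l * N l z'))"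
    by (subst sum.swap, subst (2) sum.swap) (rule refl)
  also have "\<dots> = (\<Sum>z\<in>A. \<Sum>z'\<in>A. f z * g z' * (\<Sum>l\<in>A. M z l * N l z'))"
    by (simp add: sum_distrib_left)
  finally show ?thesis .
qed

text \<open>As a matrix in its last two arguments, \<open>phi \<kappa> i\<close> is \<open>M\<^sup>T D M / \<kappa>\<close> with \<open>M = mix \<kappa>\<close>
  and \<open>D\<close> the positive diagonal matrix with entries \<open>mix \<kappa> z i\<close>; hence its inverse is
  \<open>\<kappa> N D\<^sup>-\<^sup>1 N\<^sup>T\<close> with \<open>N = mix_inv \<kappa> = M\<^sup>-\<^sup>1\<close>.\<close>

definition phi_inv :: "nat \<Rightarrow> nat \<Rightarrow> nat \<Rightarrow> nat \<Rightarrow> real" where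
  "phi_inv \<kappa> i l k = real \<kappa> * (\<Sum>z<\<kappa>. mix_inv \<kappa> l z * (mix_inv \<kappa> z k / mix \<kappa> z i))"

lemma sum_phi_phi_inv:
  assumes "0 < \<kappa>" "i < \<kappa>" "k < \<kappa>" "k' < \<kappa>"
  shows "(\<Sum>l<\<kappa>. phi \<kappa> i k l * phi_inv \<kappa> i l k') = of_bool (k = k')"
proof -
  define f where "f z = mix \<kappa> z i * mix \<kappa> z k" for z
  define g where "g z' = mix_inv \<kappa> z' k' / mix \<kappa> z' i" for z'
  have "(\<Sum>l<\<kappa>. phi \<kappa> i k l * phi_inv \<kappa> i l k')
      = (\<Sum>l<\<kappa>. (\<Sum>z<\<kappa>. f z * mix \<kappa> z l) * (\<Sum>z'<\<kappa>. mix_inv \<kappa> l z' * g z'))"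
    using assms(1) by (simp add: phi_def phi_inv_def f_def g_def)
  also have "\<dots> = (\<Sum>z<\<kappa>. \<Sum>z'<\<kappa>. f z * g z' * (\<Sum>l<\<kappa>. mix \<kappa> z l * mix_inv \<kappa> l z'))"
    by (rule sum_matrix_assoc)
  also have "\<dots> = (\<Sum>z<\<kappa>. f z * g z)"
    by (intro sum.cong refl) (simp add: sum_mix_mix_inv sum_mult_of_bool_eq)
  also have "\<dots> = (\<Sum>z<\<kappa>. mix \<kappa> k z * mix_inv \<kappa> z k')"
    using mix_pos[OF assms(1), THEN less_imp_neq] by (intro sum.cong refl) (simp add: f_def g_def mix_sym[of \<kappa> _ k])
  also have "\<dots> = of_bool (k = k')" by (rule sum_mix_mix_inv[OF assms(3,4)])
  finally show ?thesis .
qed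

lemma det_pair_mat_phi_fst:
  assumes "0 < \<kappa>"
  shows "det (pair_mat \<kappa> (\<lambda>i k j l. of_bool (i = j) * phi \<kappa> i k l)) \<noteq> 0"
proof (rule det_pair_mat_nonzero[where G = "\<lambda>j l i' k'. of_bool (j = i') * phi_inv \<kappa> j l k'"])
  fix i k i' k' assume ik: "i < \<kappa>" "k < \<kappa>" "i' < \<kappa>" "k' < \<kappa>"
  have "(\<Sum>j<\<kappa>. \<Sum>l<\<kappa>. of_bool (i = j) * phi \<kappa> i k l * (of_bool (j = i') * phi_inv \<kappa> j l k'))
      = (\<Sum>j<\<kappa>. (of_bool (i = i') * (\<Sum>l<\<kappa>. phi \<kappa> i k l * phi_inv \<kappa> i l k')) * of_bool (i = j))"
    by (intro sum.cong refl) (auto simp: sum_distrib_left)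
  also have "\<dots> = of_bool (i = i' \<and> k = k')"
    using ik by (simp add: sum_mult_of_bool_eq sum_phi_phi_inv[OF assms])
  finally show "(\<Sum>j<\<kappa>. \<Sum>l<\<kappa>. of_bool (i = j) * phi \<kappa> i k l * (of_bool (j = i') * phi_inv \<kappa> j l k'))
      = of_bool (i = i' \<and> k = k')" .
qed

lemma det_pair_mat_phi_snd:
  assumes "0 < \<kappa>"
  shows "det (pair_mat \<kappa> (\<lambda>i k j l. of_bool (k = l) * phi \<kappa> k i j)) \<noteq> 0"
proof (rule det_pair_mat_nonzero[where G = "\<lambda>j l i' k'. of_bool (l = k') * phi_inv \<kappa> l j i'"])
  fix i k i' k' assume ik: "i < \<kappa>" "k < \<kappa>" "i' < \<kappa>" "k' < \<kappa>"
  have "(\<Sum>j<\<kappa>. \<Sum>l<\<kappa>. of_bool (k = l) * phi \<kappa> k i j * (of_bool (l = k') * phi_inv \<kappa> l j i'))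
      = (\<Sum>l<\<kappa>. (of_bool (k = k') * (\<Sum>j<\<kappa>. phi \<kappa> k i j * phi_inv \<kappa> k j i')) * of_bool (k = l))"
    by (subst sum.swap) (intro sum.cong refl, auto simp: sum_distrib_left)
  also have "\<dots> = of_bool (i = i' \<and> k = k')"
    using ik by (auto simp: sum_mult_of_bool_eq sum_phi_phi_inv[OF assms])
  finally show "(\<Sum>j<\<kappa>. \<Sum>l<\<kappa>. of_bool (k = l) * phi \<kappa> k i j * (of_bool (l = k') * phi_inv \<kappa> l j i'))
      = of_bool (i = i' \<and> k = k')" .
qed

lemma asg4_assignments_quartet:
  assumes "i < \<kappa>" "k < \<kappa>" "j < \<kappa>" "l < \<kappa>"
  shows "asg4 a c b d i k j l \<in> assignments {a, b, c, d} \<kappa>"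
    and "asg4 a d b c i k j l \<in> assignments {a, b, c, d} \<kappa>"
  using asg4_assignments[OF assms, of a c b d] asg4_assignments[OF assms, of a d b c]
  by (simp_all add: insert_commute)

lemma flat_cherry_fst:
  assumes "distinct [a, b, c, d]"
    and "\<And>s. s \<in> assignments {a, b, c, d} \<kappa> \<Longrightarrow> Q s = of_bool (s a = s b) * phi \<kappa> (s a) (s c) (s d)"
  shows "flat \<kappa> Q a c b d = pair_mat \<kappa> (\<lambda>i k j l. of_bool (i = j) * phi \<kappa> i k l)"
    and "flat \<kappa> Q a d b c = pair_mat \<kappa> (\<lambda>i k j l. of_bool (i = j) * phi \<kappa> i k l)"
proof -
  have d: "distinct [a, c, b, d]" "distinct [a, d, b, c]" using assms(1) by auto
  show "flat \<kappa> Q a c b d = pair_mat \<kappa> (\<lambda>i k j l. of_bool (i = j) * phi \<kappa> i k l)"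
    unfolding flat_eq_pair_mat
    by (rule pair_mat_cong) (simp add: assms(2) asg4_assignments_quartet asg4_apply[OF d(1)])
  show "flat \<kappa> Q a d b c = pair_mat \<kappa> (\<lambda>i k j l. of_bool (i = j) * phi \<kappa> i k l)"
    unfolding flat_eq_pair_mat
  proof (rule pair_mat_cong)
    fix i k j l assume "i < \<kappa>" "k < \<kappa>" "j < \<kappa>" "l < \<kappa>"
    then show "Q (asg4 a d b c i k j l) = of_bool (i = j) * phi \<kappa> i k l"
      using phi_sym[of \<kappa> i l k] by (simp add: assms(2) asg4_assignments_quartet asg4_apply[OF d(2)])
  qed
qed

lemma flat_cherry_snd:
  assumes "distinct [a, b, c, d]"
    and "\<And>s. s \<in> assignments {a, b, c, d} \<kappa> \<Longrightarrow> Q s = of_bool (s c = s d) * phi \<kappa> (s c) (s a) (s b)"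
  shows "flat \<kappa> Q a c b d = pair_mat \<kappa> (\<lambda>i k j l. of_bool (k = l) * phi \<kappa> k i j)"
    and "flat \<kappa> Q a d b c = pair_mat \<kappa> (\<lambda>i k j l. of_bool (k = l) * phi \<kappa> k i j)"
proof -
  have d: "distinct [a, c, b, d]" "distinct [a, d, b, c]" using assms(1) by auto
  show "flat \<kappa> Q a c b d = pair_mat \<kappa> (\<lambda>i k j l. of_bool (k = l) * phi \<kappa> k i j)"
    unfolding flat_eq_pair_mat
    by (rule pair_mat_cong) (simp add: assms(2) asg4_assignments_quartet asg4_apply[OF d(1)])
  show "flat \<kappa> Q a d b c = pair_mat \<kappa> (\<lambda>i k j l. of_bool (k = l) * phi \<kappa> k i j)"
    unfolding flat_eq_pair_mat
    by (rule pair_mat_cong) (auto simp: assms(2) asg4_assignments_quartet asg4_apply[OF d(2)])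
qed

lemma det_flat_clade_tensor:
  assumes "0 < \<kappa>" "distinct [a, b, c, d]" "V \<inter> {a, b, c, d} = {a, b} \<or> V \<inter> {a, b, c, d} = {c, d}"
  shows "det (flat \<kappa> (clade_tensor \<kappa> V {a, b, c, d}) a c b d) \<noteq> 0
    \<and> det (flat \<kappa> (clade_tensor \<kappa> V {a, b, c, d}) a d b c) \<noteq> 0"
  using assms(3)
proof
  assume "V \<inter> {a, b, c, d} = {a, b}"
  then have "clade_tensor \<kappa> V {a, b, c, d} s = of_bool (s a = s b) * phi \<kappa> (s a) (s c) (s d)"
    if "s \<in> assignments {a, b, c, d} \<kappa>" for s
    using clade_tensor_quartet[OF assms(2) _ that] by simp
  then show ?thesis
    using flat_cherry_fst[OF assms(2)] det_pair_mat_phi_fst[OF assms(1)] by simp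
next
  assume cd: "V \<inter> {a, b, c, d} = {c, d}"
  have Y: "{c, d, a, b} = {a, b, c, d}" by auto
  have "distinct [c, d, a, b]" using assms(2) by auto
  then have "clade_tensor \<kappa> V {a, b, c, d} s = of_bool (s c = s d) * phi \<kappa> (s c) (s a) (s b)"
    if "s \<in> assignments {a, b, c, d} \<kappa>" for s
    using clade_tensor_quartet[of c d a b V s \<kappa>, unfolded Y] cd that by blast
  then show ?thesis
    using flat_cherry_snd[OF assms(2)] det_pair_mat_phi_snd[OF assms(1)] by simp
qed

lemma mat_rank_flat_full:
  assumes "det (flat \<kappa> P x y z w) \<noteq> 0"
  shows "mat_rank (flat \<kappa> P x y z w) = \<kappa>\<^sup>2"
  using assms vec_space.det_rank_iff[of "flat \<kappa> P x y z w" "\<kappa> * \<kappa>"]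
  by (simp add: mat_rank_def flat_def power2_eq_square)

section \<open>Rank bound from a 2-clade\<close>

lemma rank_le_card_of_sum_products:
  fixes u v :: "'b \<Rightarrow> nat \<Rightarrow> 'a::field"
  assumes "finite S" "A \<in> carrier_mat n nc"
    and "\<And>r c. r < n \<Longrightarrow> c < nc \<Longrightarrow> A $$ (r, c) = (\<Sum>p\<in>S. u p r * v p c)"
  shows "vec_space.rank n A \<le> card S"
  using assms
proof (induction S arbitrary: A rule: finite_induct)
  case empty
  then have "A = 0\<^sub>m n nc" by (intro eq_matI) auto
  then show ?case by (simp add: vec_space.rank_0I)
next
  case (insert x F)
  define R where "R = mat n nc (\<lambda>(r, c). u x r * v x c)"
  define B where "B = mat n nc (\<lambda>(r, c). \<Sum>p\<in>F. u p r * v p c)"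
  have "A = R + B"
    using insert.prems insert.hyps by (intro eq_matI) (auto simp: R_def B_def)
  moreover have "vec_space.rank n R \<le> 1"
    by (rule vec_space.rank_le_1_product_entries[of R n nc "u x" "v x"]) (auto simp: R_def)
  moreover have "vec_space.rank n B \<le> card F"
    by (rule insert.IH) (auto simp: B_def)
  moreover have "vec_space.rank n (R + B) \<le> vec_space.rank n R + vec_space.rank n B"
    by (rule vec_space.rank_subadditive) (auto simp: R_def B_def)
  ultimately show ?case using insert.hyps by simp
qed

definition sym_pairs :: "nat \<Rightarrow> (nat \<times> nat) set" where
  "sym_pairs \<kappa> = {(i, j). i \<le> j \<and> j < \<kappa>}"

lemma finite_sym_pairs: "finite (sym_pairs \<kappa>)"
  by (rule finite_subset[of _ "{..<\<kappa>} \<times> {..<\<kappa>}"]) (auto simp: sym_pairs_def)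

lemma card_sym_pairs: "card (sym_pairs \<kappa>) = (\<kappa> + 1) choose 2"
proof (induction \<kappa>)
  case (Suc k)
  have "sym_pairs (Suc k) = sym_pairs k \<union> (\<lambda>i. (i, k)) ` {..k}"
    by (auto simp: sym_pairs_def)
  moreover have "sym_pairs k \<inter> (\<lambda>i. (i, k)) ` {..k} = {}"
    by (auto simp: sym_pairs_def)
  ultimately have "card (sym_pairs (Suc k)) = card (sym_pairs k) + (k + 1)"
    by (simp add: card_Un_disjoint finite_sym_pairs card_image inj_on_def)
  then show ?case using Suc.IH by (simp add: numeral_2_eq_2)
qed (simp add: sym_pairs_def)

lemma sum_sym_pairs:
  fixes G :: "nat \<Rightarrow> nat \<Rightarrow> 'a::comm_semiring_1"
  assumes "i < \<kappa>" "j < \<kappa>" "G i j = G j i"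
  shows "(\<Sum>p\<in>sym_pairs \<kappa>. of_bool (p = (i, j) \<or> p = (j, i)) * G (fst p) (snd p)) = G i j"
proof -
  have "sym_pairs \<kappa> \<inter> {p. p = (i, j) \<or> p = (j, i)} = {(min i j, max i j)}"
    using assms(1,2) by (auto simp: sym_pairs_def min_def max_def)
  then show ?thesis
    using assms(3) by (simp add: sum_of_bool_mult_eq finite_sym_pairs min_def max_def)
qed

lemma rank_pair_mat_sym_rows:
  fixes F :: "nat \<Rightarrow> nat \<Rightarrow> nat \<Rightarrow> nat \<Rightarrow> 'a::field"
  assumes "\<And>i j k l. i < \<kappa> \<Longrightarrow> j < \<kappa> \<Longrightarrow> k < \<kappa> \<Longrightarrow> l < \<kappa> \<Longrightarrow> F i j k l = F j i k l"
  shows "vec_space.rank (\<kappa> * \<kappa>) (pair_mat \<kappa> F) \<le> (\<kappa> + 1) choose 2"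
proof -
  have "vec_space.rank (\<kappa> * \<kappa>) (pair_mat \<kappa> F) \<le> card (sym_pairs \<kappa>)"
  proof (rule rank_le_card_of_sum_products[OF finite_sym_pairs pair_mat_carrier])
    fix r c assume "r < \<kappa> * \<kappa>" "c < \<kappa> * \<kappa>"
    with div_mod_lt_square show "pair_mat \<kappa> F $$ (r, c) = (\<Sum>p\<in>sym_pairs \<kappa>.
        of_bool (p = (r div \<kappa>, r mod \<kappa>) \<or> p = (r mod \<kappa>, r div \<kappa>))
        * F (fst p) (snd p) (c div \<kappa>) (c mod \<kappa>))"
      by (subst sum_sym_pairs) (auto simp: pair_mat_def assms)
  qed
  then show ?thesis by (simp add: card_sym_pairs)
qed

lemma rank_pair_mat_sym_cols:
  fixes F :: "nat \<Rightarrow> nat \<Rightarrow> nat \<Rightarrow> nat \<Rightarrow> 'a::field"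
  assumes "\<And>i j k l. i < \<kappa> \<Longrightarrow> j < \<kappa> \<Longrightarrow> k < \<kappa> \<Longrightarrow> l < \<kappa> \<Longrightarrow> F i j k l = F i j l k"
  shows "vec_space.rank (\<kappa> * \<kappa>) (pair_mat \<kappa> F) \<le> (\<kappa> + 1) choose 2"
proof -
  have "vec_space.rank (\<kappa> * \<kappa>) (pair_mat \<kappa> F) \<le> card (sym_pairs \<kappa>)"
  proof (rule rank_le_card_of_sum_products[OF finite_sym_pairs pair_mat_carrier])
    fix r c assume "r < \<kappa> * \<kappa>" "c < \<kappa> * \<kappa>"
    with div_mod_lt_square show "pair_mat \<kappa> F $$ (r, c) = (\<Sum>p\<in>sym_pairs \<kappa>.
        F (r div \<kappa>) (r mod \<kappa>) (fst p) (snd p)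
        * of_bool (p = (c div \<kappa>, c mod \<kappa>) \<or> p = (c mod \<kappa>, c div \<kappa>)))"
      by (subst mult.commute, subst sum_sym_pairs) (auto simp: pair_mat_def assms)
  qed
  then show ?thesis by (simp add: card_sym_pairs)
qed

lemma rank_flat_marg_le:
  assumes "P \<in> UE \<kappa> T" "{x, y, z, w} \<subseteq> leaves T" "induced T {x, y, z, w} = Some T'"
    "distinct [x, y, z, w]" "{x, y} \<in> two_clades T' \<or> {z, w} \<in> two_clades T'"
  shows "mat_rank (flat \<kappa> (marg (leaves T) \<kappa> P {x, y, z, w}) x y z w) \<le> (\<kappa> + 1) choose 2"
proof -
  let ?F = "\<lambda>i j k l. marg (leaves T) \<kappa> P {x, y, z, w} (asg4 x y z w i j k l)"
  have swap: "marg (leaves T) \<kappa> P {x, y, z, w} (swap_idx (asg4 x y z w i j k l) u v) = ?F i j k l"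
    if "{u, v} \<in> two_clades T'" "i < \<kappa>" "j < \<kappa>" "k < \<kappa>" "l < \<kappa>" for u v i j k l
    by (rule UE_swap_invariant[OF assms(1-3) that(1) asg4_assignments[OF that(2-5)]])
  have "vec_space.rank (\<kappa> * \<kappa>) (pair_mat \<kappa> ?F) \<le> (\<kappa> + 1) choose 2"
    using assms(5)
  proof
    assume "{x, y} \<in> two_clades T'"
    then show ?thesis
      using swap[of x y] by (intro rank_pair_mat_sym_rows) (simp add: swap_idx_asg4[OF assms(4)])
  next
    assume "{z, w} \<in> two_clades T'"
    then show ?thesis
      using swap[of z w] by (intro rank_pair_mat_sym_cols) (simp add: swap_idx_asg4[OF assms(4)])
  qed
  then show ?thesis by (simp add: mat_rank_def flat_eq_pair_mat pair_mat_def)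
qed

section \<open>Polynomiality of the determinants\<close>

lemma poly_fun_sum:
  assumes "\<And>x. x \<in> S \<Longrightarrow> g x \<in> poly_fun"
  shows "(\<lambda>P. \<Sum>x\<in>S. g x P) \<in> poly_fun"
proof (cases "finite S")
  case True
  then show ?thesis using assms
    by (induction S rule: finite_induct) (auto intro: poly_fun.intros)
qed (simp add: poly_fun.const)

lemma poly_fun_prod:
  assumes "\<And>x. x \<in> S \<Longrightarrow> g x \<in> poly_fun"
  shows "(\<lambda>P. \<Prod>x\<in>S. g x P) \<in> poly_fun"
proof (cases "finite S")
  case True
  then show ?thesis using assms
    by (induction S rule: finite_induct) (auto intro: poly_fun.intros)
qed (simp add: poly_fun.const)

lemma poly_fun_det:
  assumes "\<And>i j. i < n \<Longrightarrow> j < n \<Longrightarrow> (\<lambda>P. E P i j) \<in> poly_fun"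
  shows "(\<lambda>P. det (mat n n (\<lambda>(i, j). E P i j))) \<in> poly_fun"
proof -
  have "(\<lambda>P. det (mat n n (\<lambda>(i, j). E P i j)))
      = (\<lambda>P. \<Sum>p\<in>{p. p permutes {0..<n}}. signof p * (\<Prod>i = 0..<n. E P i (p i)))"
    by (intro ext sum.cong prod.cong refl)
      (auto simp: det_def dest: permutes_in_image[where x = i for i])
  also have "\<dots> \<in> poly_fun"
    using assms permutes_in_image
    by (fastforce intro!: poly_fun_sum poly_fun.mult[OF poly_fun.const] poly_fun_prod)
  finally show ?thesis .
qed

lemma poly_fun_marg: "(\<lambda>P. marg X \<kappa> P Y s) \<in> poly_fun"
  by (cases "s \<in> assignments Y \<kappa>")
    (simp_all add: marg_def poly_fun_sum poly_fun.coord poly_fun.const)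

lemma poly_fun_det_flat_marg: "(\<lambda>P. det (flat \<kappa> (marg X \<kappa> P Y) x y z w)) \<in> poly_fun"
  unfolding flat_def by (rule poly_fun_det) (rule poly_fun_marg)

lemma generic_full_rank_flattenings:
  assumes "0 < \<kappa>" "well_labelled T" "S \<in> subtrees T" "{a, b, c, d} \<subseteq> leaves T" "distinct [a, b, c, d]"
    "leaves S \<inter> {a, b, c, d} = {a, b} \<or> leaves S \<inter> {a, b, c, d} = {c, d}"
  shows "generic_on (UE \<kappa> T) (\<lambda>P.
      mat_rank (flat \<kappa> (marg (leaves T) \<kappa> P {a, b, c, d}) a c b d) = \<kappa>\<^sup>2
    \<and> mat_rank (flat \<kappa> (marg (leaves T) \<kappa> P {a, b, c, d}) a d b c) = \<kappa>\<^sup>2)"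
proof -
  let ?m = "\<lambda>P. marg (leaves T) \<kappa> P {a, b, c, d}"
  let ?f = "\<lambda>P. det (flat \<kappa> (?m P) a c b d) * det (flat \<kappa> (?m P) a d b c)"
  let ?P\<^sub>0 = "clade_tensor \<kappa> (leaves S) (leaves T)"
  have "?m ?P\<^sub>0 = clade_tensor \<kappa> (leaves S) {a, b, c, d}"
    by (rule marg_clade_tensor[OF finite_leaves assms(4)])
  then have "?f ?P\<^sub>0 \<noteq> 0" using det_flat_clade_tensor[OF assms(1,5,6)] by simp
  moreover have "?P\<^sub>0 \<in> UE \<kappa> T" by (rule clade_tensor_UE[OF assms(2,3,1)])
  moreover have "?f \<in> poly_fun" by (intro poly_fun.mult poly_fun_det_flat_marg)
  ultimately show ?thesis
    unfolding generic_on_def by (intro bexI[of _ ?f]) (auto simp: mat_rank_flat_full)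
qed

theorem theorem3p3:
  fixes \<kappa> :: nat and \<psi> :: "'a rtree" and a b c d :: 'a
  assumes "\<kappa> \<ge> 2"
    and "well_labelled \<psi>"
    and "a \<in> leaves \<psi>" and "b \<in> leaves \<psi>" and "c \<in> leaves \<psi>" and "d \<in> leaves \<psi>"
    and "distinct [a, b, c, d]"
    and "quartet_topology \<psi> a b c d"
  shows "(\<forall>P \<in> UE \<kappa> \<psi>.
            mat_rank (flat \<kappa> (marg (leaves \<psi>) \<kappa> P {a, b, c, d}) a b c d) \<le> (\<kappa> + 1) choose 2)
       \<and> generic_on (UE \<kappa> \<psi>) (\<lambda>P.
            mat_rank (flat \<kappa> (marg (leaves \<psi>) \<kappa> P {a, b, c, d}) a c b d) = \<kappa>\<^sup>2
          \<and> mat_rank (flat \<kappa> (marg (leaves \<psi>) \<kappa> P {a, b, c, d}) a d b c) = \<kappa>\<^sup>2)"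
proof -
  let ?Y = "{a, b, c, d}"
  have \<kappa>: "0 < \<kappa>" using assms(1) by simp
  have Y: "?Y \<subseteq> leaves \<psi>" using assms(3-6) by simp
  obtain T' C where T': "induced \<psi> ?Y = Some T'" and C: "C \<in> two_clades T'" "C = {a, b} \<or> C = {c, d}"
    using quartet_topology_two_clade[OF assms(7,8)] .
  obtain S where S: "S \<in> subtrees \<psi>" "C = leaves S \<inter> ?Y"
    using C(1) clusters_induced[OF T'] by (auto simp: two_clades_def)
  have "{a, b} \<in> two_clades T' \<or> {c, d} \<in> two_clades T'" using C by auto
  then have "\<forall>P \<in> UE \<kappa> \<psi>. mat_rank (flat \<kappa> (marg (leaves \<psi>) \<kappa> P ?Y) a b c d) \<le> (\<kappa> + 1) choose 2"
    using rank_flat_marg_le[OF _ Y T' assms(7)] by blast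
  moreover have "generic_on (UE \<kappa> \<psi>) (\<lambda>P.
      mat_rank (flat \<kappa> (marg (leaves \<psi>) \<kappa> P ?Y) a c b d) = \<kappa>\<^sup>2
    \<and> mat_rank (flat \<kappa> (marg (leaves \<psi>) \<kappa> P ?Y) a d b c) = \<kappa>\<^sup>2)"
    using generic_full_rank_flattenings[OF \<kappa> assms(2) S(1) Y assms(7)] C(2) S(2) by simp
  ultimately show ?thesis by blast
qed

end
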